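(* Let $A$ be a Boolean algebra and $B$ a Boolean $\sigma$-algebra. Then every Boolean algebra homomorphism $\phi\colon A\to B$ extends uniquely, along the natural inclusion $A\hookrightarrow A^\infty$, to a $\sigma$-homomorphism $\Phi\colon A^\infty\to B$.
   Context: A Boolean $\sigma$-algebra is a Boolean algebra with all countable suprema and infima; a $\sigma$-homomorphism between Boolean $\sigma$-algebras is a Boolean homomorphism preserving countable suprema. For a compact Hausdorff space $X$, the Baire $\sigma$-algebra $\mathsf{Baire}(X)$ is the smallest $\sigma$-algebra on $X$ making all continuous functions $X\to\mathbb{R}$ measurable. The Baire envelope of a Boolean algebra $A$ is $A^\infty:=\mathsf{Baire}(\mathrm{Stone}(A))$, where $\mathrm{Stone}(A)$ is the Stone space; the natural inclusion $A\hookrightarrow A^\infty$ identifies each element of $A$ with the corresponding clopen subset of $\mathrm{Stone}(A)$. *)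

theory Defs
  imports "HOL-Analysis.Analysis"
begin

definition is_lub_of :: "'b::order set \<Rightarrow> 'b \<Rightarrow> bool" where
  "is_lub_of S s \<longleftrightarrow> (\<forall>x\<in>S. x \<le> s) \<and> (\<forall>u. (\<forall>x\<in>S. x \<le> u) \<longrightarrow> s \<le> u)"

text \<open>A Boolean sigma-algebra: a Boolean algebra in which every countable set has a supremum
  (countable infima then exist by complementation).\<close>
definition boolean_sigma_algebra :: "'b::boolean_algebra itself \<Rightarrow> bool" where
  "boolean_sigma_algebra _ \<longleftrightarrow> (\<forall>S::'b set. countable S \<longrightarrow> (\<exists>s. is_lub_of S s))"

definition ba_hom :: "('a::boolean_algebra \<Rightarrow> 'b::boolean_algebra) \<Rightarrow> bool" where
  "ba_hom f \<longleftrightarrow> (\<forall>x y. f (sup x y) = sup (f x) (f y)) \<and> (\<forall>x y. f (inf x y) = inf (f x) (f y))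
     \<and> (\<forall>x. f (- x) = - f x) \<and> f bot = bot \<and> f top = top"

definition ultrafilter_ba :: "'a::boolean_algebra set \<Rightarrow> bool" where
  "ultrafilter_ba U \<longleftrightarrow> top \<in> U \<and> bot \<notin> U
     \<and> (\<forall>x y. x \<in> U \<and> x \<le> y \<longrightarrow> y \<in> U)
     \<and> (\<forall>x y. x \<in> U \<and> y \<in> U \<longrightarrow> inf x y \<in> U)
     \<and> (\<forall>x. x \<in> U \<or> - x \<in> U)"

definition stone_set :: "'a::boolean_algebra \<Rightarrow> 'a set set" where
  "stone_set a = {U. ultrafilter_ba U \<and> a \<in> U}"

definition stone_space :: "'a::boolean_algebra itself \<Rightarrow> 'a set topology" where
  "stone_space _ = topology_generated_by (range (stone_set :: 'a \<Rightarrow> 'a set set))"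

text \<open>Baire sigma-algebra of a topological space: the smallest sigma-algebra on the space
  making all continuous real-valued functions measurable, i.e. generated by the preimages
  of open subsets of the reals under continuous maps.\<close>
definition Baire :: "'x topology \<Rightarrow> 'x set set" where
  "Baire X = sigma_sets (topspace X)
     {{x \<in> topspace X. f x \<in> S} | f S. continuous_map X euclideanreal f \<and> open S}"

definition baire_envelope :: "'a::boolean_algebra itself \<Rightarrow> 'a set set set" where
  "baire_envelope T = Baire (stone_space T)"

definition sigma_hom :: "'x set \<Rightarrow> 'x set set \<Rightarrow> ('x set \<Rightarrow> 'b::boolean_algebra) \<Rightarrow> bool" where
  "sigma_hom \<Omega> M F \<longleftrightarrow>
     (\<forall>X\<in>M. \<forall>Y\<in>M. F (X \<union> Y) = sup (F X) (F Y)) \<and>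
     (\<forall>X\<in>M. \<forall>Y\<in>M. F (X \<inter> Y) = inf (F X) (F Y)) \<and>
     (\<forall>X\<in>M. F (\<Omega> - X) = - F X) \<and> F {} = bot \<and> F \<Omega> = top \<and>
     (\<forall>C. countable C \<and> C \<subseteq> M \<longrightarrow> is_lub_of (F ` C) (F (\<Union>C)))"

end

theory Submission
  imports Defs
begin

(* The argument is the Loomis-Sikorski one.  The Baire sigma-algebra of the compact, zero-dimensional
   space Stone(A) is generated by the clopen sets stone_set a: an open real set is a countable union of
   closed ones, and by compactness a clopen set fits between any closed subset of Stone(A) and any open
   set containing it.

   The homomorphism phi induces the continuous map V |-> phi^-1(V) from Stone(B) to Stone(A).  Say that
   b in B represents a set X of Stone(A) if the preimage of X and stone_set b differ by a set covered
   by countably many "gaps" stone_set (Sup_n b_n) - (UN n. stone_set b_n).  Representable sets contain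
   the clopens and are closed under complements and countable unions (the supremum of representatives
   represents the union, up to one more gap).  Since B is sigma-complete, a Baire category argument in
   Stone(B) shows that no nonzero clopen set is covered by countably many gaps, so representatives are
   unique and X |-> its representative is the required sigma-homomorphism.  It is unique because two
   sigma-homomorphisms agreeing on generators agree on the generated sigma-algebra. *)

section \<open>Ultrafilters of a Boolean algebra\<close>

definition proper_filter :: "'a::boolean_algebra set \<Rightarrow> bool" where
  "proper_filter F \<longleftrightarrow> top \<in> F \<and> bot \<notin> F \<and> (\<forall>x y. x \<in> F \<and> x \<le> y \<longrightarrow> y \<in> F)
     \<and> (\<forall>x y. x \<in> F \<and> y \<in> F \<longrightarrow> inf x y \<in> F)"

lemma ultrafilter_ba_top: "ultrafilter_ba U \<Longrightarrow> top \<in> U"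
  unfolding ultrafilter_ba_def by blast

lemma ultrafilter_ba_bot: "ultrafilter_ba U \<Longrightarrow> bot \<notin> U"
  unfolding ultrafilter_ba_def by blast

lemma ultrafilter_ba_mono: "ultrafilter_ba U \<Longrightarrow> x \<in> U \<Longrightarrow> x \<le> y \<Longrightarrow> y \<in> U"
  unfolding ultrafilter_ba_def by blast

lemma ultrafilter_ba_compl_iff: "ultrafilter_ba U \<Longrightarrow> - x \<in> U \<longleftrightarrow> x \<notin> U"
  unfolding ultrafilter_ba_def by (metis inf_compl_bot)

lemma ultrafilter_ba_inf_iff: "ultrafilter_ba U \<Longrightarrow> inf x y \<in> U \<longleftrightarrow> x \<in> U \<and> y \<in> U"
  unfolding ultrafilter_ba_def by (meson inf.cobounded1 inf.cobounded2)

lemma ultrafilter_ba_sup_iff: "ultrafilter_ba U \<Longrightarrow> sup x y \<in> U \<longleftrightarrow> x \<in> U \<or> y \<in> U"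
  using ultrafilter_ba_compl_iff[of U "inf (- x) (- y)"] ultrafilter_ba_inf_iff[of U "- x" "- y"]
    ultrafilter_ba_compl_iff[of U x] ultrafilter_ba_compl_iff[of U y]
  by simp

lemma proper_filter_Union_chain:
  assumes "C \<noteq> {}" "\<forall>F\<in>C. proper_filter F" "chain\<^sub>\<subseteq> C"
  shows "proper_filter (\<Union>C)"
proof -
  have filt: "top \<in> F" "bot \<notin> F" "\<And>x y. x \<in> F \<Longrightarrow> x \<le> y \<Longrightarrow> y \<in> F"
      "\<And>x y. x \<in> F \<Longrightarrow> y \<in> F \<Longrightarrow> inf x y \<in> F" if "F \<in> C" for F
    using assms(2) that unfolding proper_filter_def by auto
  have "inf x y \<in> \<Union>C" if "x \<in> \<Union>C" "y \<in> \<Union>C" for x y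
  proof -
    from that obtain F G where FG: "F \<in> C" "G \<in> C" "x \<in> F" "y \<in> G" by blast
    from assms(3) FG(1,2) have "F \<subseteq> G \<or> G \<subseteq> F" unfolding chain_subset_def by blast
    then show ?thesis using FG filt(4) by blast
  qed
  moreover have "top \<in> \<Union>C" using assms(1) filt(1) by blast
  ultimately show ?thesis unfolding proper_filter_def using filt(2,3) by blast
qed

lemma proper_filter_upward_closure:
  fixes S :: "'a::boolean_algebra set"
  assumes "S \<noteq> {}" "bot \<notin> S" and directed: "\<And>a b. a \<in> S \<Longrightarrow> b \<in> S \<Longrightarrow> \<exists>c\<in>S. c \<le> inf a b"
  shows "proper_filter {x. \<exists>s\<in>S. s \<le> x}"
proof -
  let ?F = "{x. \<exists>s\<in>S. s \<le> x}"
  have "top \<in> ?F" using assms(1) top_greatest by blast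
  moreover have "bot \<notin> ?F" using assms(2) le_bot by blast
  moreover have "y \<in> ?F" if "x \<in> ?F" "x \<le> y" for x y
  proof -
    from that(1) obtain s where "s \<in> S" "s \<le> x" by blast
    moreover from this(2) that(2) have "s \<le> y" by (rule order.trans)
    ultimately show ?thesis by blast
  qed
  moreover have "inf x y \<in> ?F" if "x \<in> ?F" "y \<in> ?F" for x y
  proof -
    from that obtain s t where "s \<in> S" "t \<in> S" "s \<le> x" "t \<le> y" by blast
    moreover obtain c where "c \<in> S" "c \<le> inf s t" using directed[OF \<open>s \<in> S\<close> \<open>t \<in> S\<close>] ..
    then have "c \<le> inf x y" using \<open>s \<le> x\<close> \<open>t \<le> y\<close> by (meson inf_mono order.trans)
    with \<open>c \<in> S\<close> show ?thesis by blast
  qed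
  ultimately show ?thesis unfolding proper_filter_def by blast
qed

lemma proper_filter_adjoin:
  assumes F: "proper_filter F" and x: "- x \<notin> F"
  shows "proper_filter {y. \<exists>s\<in>(\<lambda>m. inf m x) ` F. s \<le> y}"
proof (rule proper_filter_upward_closure)
  have top: "top \<in> F" and inf: "\<And>a b. a \<in> F \<Longrightarrow> b \<in> F \<Longrightarrow> inf a b \<in> F"
    and up: "\<And>a b. a \<in> F \<Longrightarrow> a \<le> b \<Longrightarrow> b \<in> F"
    using F unfolding proper_filter_def by blast+
  from top show "(\<lambda>m. inf m x) ` F \<noteq> {}" by blast
  have "inf m x \<noteq> bot" if "m \<in> F" for m
    using that x up inf_shunt by blast
  then show "bot \<notin> (\<lambda>m. inf m x) ` F" by (metis imageE)
  fix a b assume "a \<in> (\<lambda>m. inf m x) ` F" "b \<in> (\<lambda>m. inf m x) ` F"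
  then obtain m m' where "m \<in> F" "m' \<in> F" "a = inf m x" "b = inf m' x" by blast
  moreover from this have "inf (inf m m') x = inf a b" by (simp add: inf_aci)
  ultimately show "\<exists>c\<in>(\<lambda>m. inf m x) ` F. c \<le> inf a b" using inf by (metis image_eqI order_refl)
qed

lemma proper_filter_extends_to_ultrafilter:
  assumes "proper_filter F"
  shows "\<exists>U. ultrafilter_ba U \<and> F \<subseteq> U"
proof -
  let ?P = "{G. proper_filter G \<and> F \<subseteq> G}"
  have "\<exists>U\<in>?P. \<forall>G\<in>C. G \<subseteq> U" if "C \<in> chains ?P" for C
  proof (cases "C = {}")
    case True
    then show ?thesis using assms by blast
  next
    case False
    from that have "C \<subseteq> ?P" "chain\<^sub>\<subseteq> C" unfolding chains_def by blast+
    with False have "proper_filter (\<Union>C)" "F \<subseteq> \<Union>C"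
      using proper_filter_Union_chain[of C] by blast+
    then show ?thesis by blast
  qed
  then obtain M where M: "proper_filter M" "F \<subseteq> M" and max: "\<forall>G\<in>?P. M \<subseteq> G \<longrightarrow> G = M"
    using Zorn_Lemma2[of ?P] by auto
  have "x \<in> M \<or> - x \<in> M" for x
  proof (rule ccontr)
    assume x: "\<not> (x \<in> M \<or> - x \<in> M)"
    let ?M' = "{y. \<exists>s\<in>(\<lambda>m. inf m x) ` M. s \<le> y}"
    have "proper_filter ?M'" using proper_filter_adjoin[OF M(1)] x by blast
    moreover have "M \<subseteq> ?M'" by (auto intro: order_trans[OF inf.cobounded1])
    ultimately have "?M' = M" using max M(2) by blast
    moreover have "top \<in> M" using M(1) unfolding proper_filter_def by blast
    then have "x \<in> ?M'" by force
    ultimately show False using x by blast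
  qed
  moreover have "top \<in> M \<and> bot \<notin> M \<and> (\<forall>x y. x \<in> M \<and> x \<le> y \<longrightarrow> y \<in> M)
      \<and> (\<forall>x y. x \<in> M \<and> y \<in> M \<longrightarrow> inf x y \<in> M)"
    using M(1) unfolding proper_filter_def .
  ultimately have "ultrafilter_ba M" unfolding ultrafilter_ba_def by blast
  then show ?thesis using M(2) by blast
qed

lemma down_directed_extends_to_ultrafilter:
  fixes S :: "'a::boolean_algebra set"
  assumes "S \<noteq> {}" "bot \<notin> S" "\<And>a b. a \<in> S \<Longrightarrow> b \<in> S \<Longrightarrow> \<exists>c\<in>S. c \<le> inf a b"
  shows "\<exists>U. ultrafilter_ba U \<and> S \<subseteq> U"
proof -
  have "\<exists>U. ultrafilter_ba U \<and> {x. \<exists>s\<in>S. s \<le> x} \<subseteq> U"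
    using assms by (intro proper_filter_extends_to_ultrafilter proper_filter_upward_closure)
  then obtain U where "ultrafilter_ba U" "{x. \<exists>s\<in>S. s \<le> x} \<subseteq> U" by blast
  moreover have "S \<subseteq> {x. \<exists>s\<in>S. s \<le> x}" by blast
  ultimately show ?thesis by blast
qed

lemma decseq_extends_to_ultrafilter:
  fixes cs :: "nat \<Rightarrow> 'a::boolean_algebra"
  assumes "decseq cs" "\<And>n. cs n \<noteq> bot"
  shows "\<exists>U. ultrafilter_ba U \<and> range cs \<subseteq> U"
proof (rule down_directed_extends_to_ultrafilter)
  show "bot \<notin> range cs" using assms(2) by (metis rangeE)
  fix a b assume "a \<in> range cs" "b \<in> range cs"
  then obtain m n where "a = cs m" "b = cs n" by blast
  then show "\<exists>c\<in>range cs. c \<le> inf a b"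
    using decseqD[OF assms(1), of m "max m n"] decseqD[OF assms(1), of n "max m n"] by auto
qed simp

section \<open>The Stone space\<close>

lemma stone_set_inf: "stone_set (inf x y) = stone_set x \<inter> stone_set y"
  unfolding stone_set_def using ultrafilter_ba_inf_iff by blast

lemma stone_set_sup: "stone_set (sup x y) = stone_set x \<union> stone_set y"
  unfolding stone_set_def using ultrafilter_ba_sup_iff by blast

lemma stone_set_compl: "stone_set (- x) = {U. ultrafilter_ba U} - stone_set x"
  unfolding stone_set_def using ultrafilter_ba_compl_iff by blast

lemma stone_set_bot: "stone_set bot = {}"
  unfolding stone_set_def using ultrafilter_ba_bot by blast

lemma stone_set_top: "stone_set top = {U. ultrafilter_ba U}"
  unfolding stone_set_def using ultrafilter_ba_top by blast

lemma stone_set_mono: "x \<le> y \<Longrightarrow> stone_set x \<subseteq> stone_set y"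
  unfolding stone_set_def using ultrafilter_ba_mono by blast

lemma stone_set_subset: "stone_set x \<subseteq> {U. ultrafilter_ba U}"
  unfolding stone_set_def by blast

lemma topspace_stone_space: "topspace (stone_space TYPE('a::boolean_algebra)) = {U::'a set. ultrafilter_ba U}"
  using stone_set_subset stone_set_top unfolding stone_space_def by auto

lemma openin_stone_set: "openin (stone_space TYPE('a::boolean_algebra)) (stone_set (a::'a))"
  unfolding stone_space_def by (rule topology_generated_by_Basis) simp

lemma closedin_stone_set: "closedin (stone_space TYPE('a::boolean_algebra)) (stone_set (a::'a))"
proof -
  have "openin (stone_space TYPE('a)) (topspace (stone_space TYPE('a)) - stone_set a)"
    using openin_stone_set[of "- a"] by (simp add: stone_set_compl topspace_stone_space)
  then show ?thesis by (simp add: closedin_def topspace_stone_space stone_set_subset)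
qed

lemma openin_stone_space_imp_stone_set:
  assumes "openin (stone_space TYPE('a::boolean_algebra)) G" "U \<in> G"
  shows "\<exists>a::'a. U \<in> stone_set a \<and> stone_set a \<subseteq> G"
proof -
  have "generate_topology_on (range (stone_set :: 'a \<Rightarrow> _)) G"
    using assms(1) unfolding stone_space_def by (rule openin_topology_generated_by)
  then show ?thesis using assms(2)
  proof (induction arbitrary: U)
    case Empty
    then show ?case by simp
  next
    case (Int G H)
    then obtain a b where "U \<in> stone_set a" "stone_set a \<subseteq> G" "U \<in> stone_set b" "stone_set b \<subseteq> H"
      by blast
    then show ?case by (intro exI[of _ "inf a b"]) (auto simp: stone_set_inf)
  next
    case (UN K)
    then obtain G where "G \<in> K" "U \<in> G" by blast
    with UN.IH obtain a where "U \<in> stone_set a" "stone_set a \<subseteq> G" by blast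
    with \<open>G \<in> K\<close> show ?case by blast
  next
    case (Basis G)
    then show ?case by blast
  qed
qed

text \<open>Compactness of the Stone space.\<close>
lemma sup_closed_stone_cover_contains_top:
  fixes S :: "'a::boolean_algebra set"
  assumes "S \<noteq> {}" and sup_closed: "\<And>a b. a \<in> S \<Longrightarrow> b \<in> S \<Longrightarrow> sup a b \<in> S"
    and cover: "{U. ultrafilter_ba U} \<subseteq> (\<Union>a\<in>S. stone_set a)"
  shows "top \<in> S"
proof (rule ccontr)
  assume "top \<notin> S"
  then have "bot \<notin> uminus ` S" by (metis compl_bot_eq double_compl image_iff)
  moreover have "\<exists>c\<in>uminus ` S. c \<le> inf a b" if "a \<in> uminus ` S" "b \<in> uminus ` S" for a b
  proof -
    from that obtain s t where "s \<in> S" "t \<in> S" "a = - s" "b = - t" by blast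
    then have "- sup s t \<in> uminus ` S" using sup_closed by blast
    moreover have "- sup s t = inf a b" using \<open>a = - s\<close> \<open>b = - t\<close> by simp
    ultimately show ?thesis by (metis order_refl)
  qed
  moreover have "uminus ` S \<noteq> {}" using assms(1) by blast
  ultimately have "\<exists>U. ultrafilter_ba U \<and> uminus ` S \<subseteq> U"
    by (intro down_directed_extends_to_ultrafilter)
  then obtain U where U: "ultrafilter_ba U" "uminus ` S \<subseteq> U" by blast
  then obtain a where "a \<in> S" "U \<in> stone_set a" using cover by blast
  then have "a \<in> U" "- a \<in> U" using U(2) unfolding stone_set_def by blast+
  then show False using ultrafilter_ba_compl_iff[OF U(1)] by blast
qed

lemma stone_set_between_closedin_openin:
  fixes K :: "'a::boolean_algebra set set"
  assumes K: "closedin (stone_space TYPE('a)) K" and G: "openin (stone_space TYPE('a)) G"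
    and "K \<subseteq> G"
  shows "\<exists>a::'a. K \<subseteq> stone_set a \<and> stone_set a \<subseteq> G"
proof -
  define W where "W = topspace (stone_space TYPE('a)) - K"
  define S where "S = {sup a c | a c :: 'a. stone_set a \<subseteq> G \<and> stone_set c \<subseteq> W}"
  have "sup bot bot \<in> S" unfolding S_def using stone_set_bot by blast
  then have "S \<noteq> {}" by blast
  moreover have "sup a b \<in> S" if "a \<in> S" "b \<in> S" for a b
  proof -
    from that obtain a1 c1 a2 c2 where "a = sup a1 c1" "b = sup a2 c2"
      "stone_set a1 \<subseteq> G" "stone_set c1 \<subseteq> W" "stone_set a2 \<subseteq> G" "stone_set c2 \<subseteq> W"
      unfolding S_def by blast
    moreover from this have "sup a b = sup (sup a1 a2) (sup c1 c2)"
      "stone_set (sup a1 a2) \<subseteq> G" "stone_set (sup c1 c2) \<subseteq> W"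
      by (simp_all add: sup_aci stone_set_sup)
    ultimately show ?thesis unfolding S_def by blast
  qed
  moreover have "{U. ultrafilter_ba U} \<subseteq> (\<Union>a\<in>S. stone_set a)"
  proof
    fix U :: "'a set" assume "U \<in> {U. ultrafilter_ba U}"
    then have "U \<in> G \<or> U \<in> W" using \<open>K \<subseteq> G\<close> unfolding W_def topspace_stone_space by blast
    moreover have "openin (stone_space TYPE('a)) W" using K unfolding W_def by blast
    ultimately obtain a where "U \<in> stone_set a" "stone_set a \<subseteq> G \<or> stone_set a \<subseteq> W"
      using openin_stone_space_imp_stone_set G by metis
    from this(2) have "a \<in> S"
    proof
      assume "stone_set a \<subseteq> G"
      then have "sup a bot \<in> S" unfolding S_def using stone_set_bot by blast
      then show ?thesis by simp
    next
      assume "stone_set a \<subseteq> W"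
      then have "sup bot a \<in> S" unfolding S_def using stone_set_bot by blast
      then show ?thesis by simp
    qed
    with \<open>U \<in> stone_set a\<close> show "U \<in> (\<Union>a\<in>S. stone_set a)" by blast
  qed
  ultimately have "top \<in> S" by (rule sup_closed_stone_cover_contains_top)
  then obtain a c where ac: "top = sup a c" "stone_set a \<subseteq> G" "stone_set c \<subseteq> W"
    unfolding S_def by blast
  have "stone_set a \<union> stone_set c = {U. ultrafilter_ba U}"
    using ac(1) stone_set_sup stone_set_top by metis
  then have "K \<subseteq> stone_set a \<union> stone_set c"
    using closedin_subset[OF K] unfolding topspace_stone_space by simp
  then have "K \<subseteq> stone_set a" using ac(3) unfolding W_def by blast
  then show ?thesis using ac(2) by blast
qed

section \<open>Baire sets of the Stone space\<close>

lemma continuous_map_indicator_clopen: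
  assumes "openin X S" "closedin X S"
  shows "continuous_map X euclideanreal (indicator S)"
  unfolding continuous_map_def
proof (intro conjI allI impI)
  show "indicator S \<in> topspace X \<rightarrow> topspace euclideanreal" by simp
  fix T :: "real set"
  have "{x \<in> topspace X. indicator S x \<in> T}
      = (if 1 \<in> T then S else {}) \<union> (if 0 \<in> T then topspace X - S else {})"
    using closedin_subset[OF assms(2)] by (auto simp: indicator_def)
  moreover have "openin X (topspace X - S)" using assms(2) by blast
  ultimately show "openin X {x \<in> topspace X. indicator S x \<in> T}"
    using assms(1) by (simp add: openin_Un)
qed

lemma open_preimage_eq_UN_stone_set:
  fixes f :: "'a::boolean_algebra set \<Rightarrow> real"
  assumes f: "continuous_map (stone_space TYPE('a)) euclideanreal f" and "open T"
  shows "\<exists>a::nat \<Rightarrow> 'a. {x \<in> topspace (stone_space TYPE('a)). f x \<in> T} = (\<Union>n. stone_set (a n))"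
proof -
  let ?X = "stone_space TYPE('a)"
  let ?P = "{x \<in> topspace ?X. f x \<in> T}"
  have "fsigma_in euclideanreal T"
    using \<open>open T\<close> by (intro open_imp_fsigma_in metrizable_space_euclidean) simp
  then have "\<exists>C. (\<forall>n. closedin euclideanreal (C n)) \<and> (\<forall>n. C n \<subseteq> C (Suc n)) \<and> (\<Union>n. C n) = T"
    by (simp only: fsigma_in_ascending)
  then obtain C :: "nat \<Rightarrow> real set" where C: "\<forall>n. closedin euclideanreal (C n)" "(\<Union>n. C n) = T" by blast
  have sep: "\<exists>a::'a. {x \<in> topspace ?X. f x \<in> C n} \<subseteq> stone_set a \<and> stone_set a \<subseteq> ?P" for n
  proof (rule stone_set_between_closedin_openin)
    show "closedin ?X {x \<in> topspace ?X. f x \<in> C n}"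
      using f C(1) by (intro closedin_continuous_map_preimage) auto
    show "openin ?X ?P" using f \<open>open T\<close> by (intro openin_continuous_map_preimage) auto
    show "{x \<in> topspace ?X. f x \<in> C n} \<subseteq> ?P" using C(2) by blast
  qed
  have "\<exists>a. \<forall>n. {x \<in> topspace ?X. f x \<in> C n} \<subseteq> stone_set (a n) \<and> stone_set (a n) \<subseteq> ?P"
    by (rule choice) (rule allI, rule sep)
  then obtain a :: "nat \<Rightarrow> 'a" where
    a: "\<forall>n. {x \<in> topspace ?X. f x \<in> C n} \<subseteq> stone_set (a n) \<and> stone_set (a n) \<subseteq> ?P" ..
  have "?P \<subseteq> (\<Union>n. stone_set (a n))"
  proof
    fix x assume "x \<in> ?P"
    then obtain n where "x \<in> {x \<in> topspace ?X. f x \<in> C n}" using C(2) by blast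
    then show "x \<in> (\<Union>n. stone_set (a n))" using a by blast
  qed
  moreover have "(\<Union>n. stone_set (a n)) \<subseteq> ?P" using a by blast
  ultimately have "?P = (\<Union>n. stone_set (a n))" by (rule equalityI)
  then show ?thesis by (rule exI[of _ a])
qed

lemma baire_envelope_eq_sigma_sets_stone_set:
  "baire_envelope TYPE('a::boolean_algebra) = sigma_sets {U::'a set. ultrafilter_ba U} (range stone_set)"
proof -
  let ?X = "stone_space TYPE('a)"
  let ?G = "{{x \<in> topspace ?X. f x \<in> S} | f S. continuous_map ?X euclideanreal f \<and> open S}"
  have preimage_in_sigma_stone: "P \<in> sigma_sets (topspace ?X) (range stone_set)" if "P \<in> ?G" for P
  proof -
    from that obtain f T where P: "P = {x \<in> topspace ?X. f x \<in> T}"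
      and f: "continuous_map ?X euclideanreal f" and "open T" by blast
    obtain a :: "nat \<Rightarrow> 'a" where "{x \<in> topspace ?X. f x \<in> T} = (\<Union>n. stone_set (a n))"
      using open_preimage_eq_UN_stone_set[OF f \<open>open T\<close>] by blast
    with P have "P = (\<Union>n. stone_set (a n))" by simp
    then show ?thesis by (auto intro: sigma_sets.Union sigma_sets.Basic)
  qed
  have stone_set_in_sigma_Baire: "stone_set a \<in> sigma_sets (topspace ?X) ?G" for a :: 'a
  proof -
    have "continuous_map ?X euclideanreal (indicator (stone_set a))"
      using openin_stone_set closedin_stone_set by (rule continuous_map_indicator_clopen)
    then have "{x \<in> topspace ?X. indicator (stone_set a) x \<in> {0::real<..}} \<in> ?G"
      using open_greaterThan by blast
    moreover have "{x \<in> topspace ?X. indicator (stone_set a) x \<in> {0::real<..}} = stone_set a"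
      using stone_set_subset by (auto simp: topspace_stone_space indicator_def)
    ultimately have "stone_set a \<in> ?G" by simp
    then show ?thesis by (rule sigma_sets.Basic)
  qed
  have "sigma_sets (topspace ?X) ?G = sigma_sets (topspace ?X) (range stone_set)"
    by (rule sigma_sets_eqI) (blast intro: preimage_in_sigma_stone stone_set_in_sigma_Baire)+
  then show ?thesis unfolding baire_envelope_def Baire_def topspace_stone_space .
qed

section \<open>Countable suprema and their gaps\<close>

definition seq_lub :: "(nat \<Rightarrow> 'b::boolean_algebra) \<Rightarrow> 'b" where
  "seq_lub bs = (SOME l. is_lub_of (range bs) l)"

lemma is_lub_of_seq_lub:
  assumes "boolean_sigma_algebra TYPE('b::boolean_algebra)"
  shows "is_lub_of (range (bs :: nat \<Rightarrow> 'b)) (seq_lub bs)"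
proof -
  have "\<exists>l. is_lub_of (range bs) l"
    using assms unfolding boolean_sigma_algebra_def by simp
  then show ?thesis unfolding seq_lub_def by (rule someI_ex)
qed

lemma is_lub_of_unique: "is_lub_of S (x::'b::order) \<Longrightarrow> is_lub_of S y \<Longrightarrow> x = y"
  unfolding is_lub_of_def by (meson order_antisym)

text \<open>Gaps are closed and nowhere dense in Stone(B); the \<open>lub_null\<close> sets form the sigma-ideal
  modulo which the Loomis-Sikorski representation is taken.\<close>
definition lub_gap :: "(nat \<Rightarrow> 'b::boolean_algebra) \<Rightarrow> 'b set set" where
  "lub_gap bs = stone_set (seq_lub bs) - (\<Union>n. stone_set (bs n))"

definition lub_null :: "'b::boolean_algebra set set \<Rightarrow> bool" where
  "lub_null Y \<longleftrightarrow> (\<exists>bss :: nat \<Rightarrow> nat \<Rightarrow> 'b. Y \<subseteq> (\<Union>n. lub_gap (bss n)))"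

lemma lub_null_subset: "lub_null Z \<Longrightarrow> Y \<subseteq> Z \<Longrightarrow> lub_null Y"
  unfolding lub_null_def by (meson order_trans)

lemma lub_null_empty: "lub_null {}"
  unfolding lub_null_def by simp

lemma lub_null_lub_gap: "lub_null (lub_gap bs)"
  unfolding lub_null_def by (intro exI[of _ "\<lambda>_. bs"]) simp

lemma lub_null_UN:
  fixes Y :: "nat \<Rightarrow> 'b::boolean_algebra set set"
  assumes "\<And>n. lub_null (Y n)"
  shows "lub_null (\<Union>n. Y n)"
proof -
  have "\<forall>n. \<exists>bss. Y n \<subseteq> (\<Union>m::nat. lub_gap (bss m))"
    using assms unfolding lub_null_def by blast
  then have "\<exists>B. \<forall>n. Y n \<subseteq> (\<Union>m::nat. lub_gap (B n m))" by (rule choice)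
  then obtain B :: "nat \<Rightarrow> nat \<Rightarrow> nat \<Rightarrow> 'b" where B: "\<forall>n. Y n \<subseteq> (\<Union>m. lub_gap (B n m))" ..
  have "(\<Union>n. Y n) \<subseteq> (\<Union>k. lub_gap (case_prod B (prod_decode k)))"
  proof
    fix x assume "x \<in> (\<Union>n. Y n)"
    then obtain n m where "x \<in> lub_gap (B n m)" using B by blast
    then have "x \<in> lub_gap (case_prod B (prod_decode (prod_encode (n, m))))" by simp
    then show "x \<in> (\<Union>k. lub_gap (case_prod B (prod_decode k)))" by blast
  qed
  then show ?thesis unfolding lub_null_def by (rule exI[of _ "\<lambda>k. case_prod B (prod_decode k)"])
qed

lemma lub_null_Un:
  assumes "lub_null Y" "lub_null Z"
  shows "lub_null (Y \<union> Z)"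
proof -
  have "lub_null (\<Union>n::nat. if n = 0 then Y else Z)" by (rule lub_null_UN) (simp add: assms)
  moreover have "Y \<union> Z \<subseteq> (\<Union>n::nat. if n = 0 then Y else Z)"
    using UN_upper[of "0::nat" UNIV "\<lambda>n. if n = 0 then Y else Z"]
      UN_upper[of "1::nat" UNIV "\<lambda>n. if n = 0 then Y else Z"]
    by simp
  ultimately show ?thesis by (rule lub_null_subset)
qed

lemma exists_below_disjoint_lub_gap:
  assumes bsa: "boolean_sigma_algebra TYPE('b::boolean_algebra)" and "(c::'b) \<noteq> bot"
  shows "\<exists>d. d \<noteq> bot \<and> d \<le> c \<and> stone_set d \<inter> lub_gap bs = {}"
proof (cases "inf c (seq_lub bs) = bot")
  case True
  then have "stone_set c \<inter> stone_set (seq_lub bs) = {}" by (metis stone_set_inf stone_set_bot)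
  then have "stone_set c \<inter> lub_gap bs = {}" unfolding lub_gap_def by blast
  then show ?thesis using \<open>c \<noteq> bot\<close> by blast
next
  case False
  have "\<exists>k. inf c (bs k) \<noteq> bot"
  proof (rule ccontr)
    assume "\<nexists>k. inf c (bs k) \<noteq> bot"
    then have "inf (bs k) c = bot" for k by (simp add: inf_commute)
    then have "\<forall>k. bs k \<le> - c" by (simp add: inf_shunt)
    then have "seq_lub bs \<le> - c" using is_lub_of_seq_lub[OF bsa, of bs] unfolding is_lub_of_def by blast
    then have "inf (seq_lub bs) c = bot" by (simp add: inf_shunt)
    then show False using False by (simp add: inf_commute)
  qed
  then obtain k where "inf c (bs k) \<noteq> bot" ..
  moreover have "stone_set (inf c (bs k)) \<inter> lub_gap bs = {}"
    unfolding lub_gap_def stone_set_inf by blast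
  ultimately show ?thesis by (intro exI[of _ "inf c (bs k)"]) simp
qed

text \<open>Baire category: shrink \<open>c\<close> step by step to avoid the \<open>n\<close>-th gap; an ultrafilter through the
  shrinking sequence lies in \<open>stone_set c\<close> but in no gap.\<close>
lemma lub_null_stone_set_imp_bot:
  assumes bsa: "boolean_sigma_algebra TYPE('b::boolean_algebra)" and "lub_null (stone_set (c::'b))"
  shows "c = bot"
proof (rule ccontr)
  assume "c \<noteq> bot"
  from assms(2) obtain bss :: "nat \<Rightarrow> nat \<Rightarrow> 'b" where cover: "stone_set c \<subseteq> (\<Union>n. lub_gap (bss n))"
    unfolding lub_null_def by blast
  define shrink :: "'b \<Rightarrow> (nat \<Rightarrow> 'b) \<Rightarrow> 'b" where
    "shrink d bs = (SOME e. e \<noteq> bot \<and> e \<le> d \<and> stone_set e \<inter> lub_gap bs = {})" for d bs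
  have shrink: "shrink d bs \<noteq> bot \<and> shrink d bs \<le> d \<and> stone_set (shrink d bs) \<inter> lub_gap bs = {}"
    if "d \<noteq> bot" for d bs
    unfolding shrink_def by (rule someI_ex) (rule exists_below_disjoint_lub_gap[OF bsa that])
  define cs where "cs = rec_nat c (\<lambda>n d. shrink d (bss n))"
  have cs_Suc: "cs (Suc n) = shrink (cs n) (bss n)" for n unfolding cs_def by simp
  have cs_nonbot: "cs n \<noteq> bot" for n
    by (induction n) (simp_all add: cs_def \<open>c \<noteq> bot\<close> shrink)
  have dec: "cs (Suc n) \<le> cs n" and disj: "stone_set (cs (Suc n)) \<inter> lub_gap (bss n) = {}" for n
    using shrink[OF cs_nonbot[of n]] unfolding cs_Suc by simp_all
  have "decseq cs" using dec by (rule decseq_SucI)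
  then have "\<exists>U. ultrafilter_ba U \<and> range cs \<subseteq> U"
    using cs_nonbot by (rule decseq_extends_to_ultrafilter)
  then obtain U where U: "ultrafilter_ba U" "range cs \<subseteq> U" by blast
  then have U_cs: "U \<in> stone_set (cs n)" for n unfolding stone_set_def by blast
  then have "U \<in> stone_set c" using U_cs[of 0] by (simp add: cs_def)
  then obtain n where "U \<in> lub_gap (bss n)" using cover by blast
  then show False using disj[of n] U_cs[of "Suc n"] by blast
qed

section \<open>Representing Baire sets by elements of B\<close>

definition stone_preimage :: "('a::boolean_algebra \<Rightarrow> 'b::boolean_algebra) \<Rightarrow> 'a set set \<Rightarrow> 'b set set" where
  "stone_preimage \<phi> X = {V. ultrafilter_ba V \<and> {a. \<phi> a \<in> V} \<in> X}"

definition represents :: "('a::boolean_algebra \<Rightarrow> 'b::boolean_algebra) \<Rightarrow> 'a set set \<Rightarrow> 'b \<Rightarrow> bool" where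
  "represents \<phi> X b \<longleftrightarrow> lub_null (sym_diff (stone_preimage \<phi> X) (stone_set b))"

lemma ba_hom_mono: "ba_hom \<phi> \<Longrightarrow> x \<le> y \<Longrightarrow> \<phi> x \<le> \<phi> y"
  unfolding ba_hom_def by (metis sup.absorb_iff2 sup.cobounded1)

lemma ultrafilter_ba_hom_preimage:
  assumes h: "ba_hom \<phi>" and V: "ultrafilter_ba V"
  shows "ultrafilter_ba {a. \<phi> a \<in> V}"
  unfolding ultrafilter_ba_def
proof (intro conjI allI impI)
  show "top \<in> {a. \<phi> a \<in> V}" using h ultrafilter_ba_top[OF V] unfolding ba_hom_def by simp
  show "bot \<notin> {a. \<phi> a \<in> V}" using h ultrafilter_ba_bot[OF V] unfolding ba_hom_def by simp
  fix x y
  show "y \<in> {a. \<phi> a \<in> V}" if "x \<in> {a. \<phi> a \<in> V} \<and> x \<le> y"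
    using that ba_hom_mono[OF h] ultrafilter_ba_mono[OF V] by blast
  show "inf x y \<in> {a. \<phi> a \<in> V}" if "x \<in> {a. \<phi> a \<in> V} \<and> y \<in> {a. \<phi> a \<in> V}"
    using that h ultrafilter_ba_inf_iff[OF V] unfolding ba_hom_def by simp
  show "x \<in> {a. \<phi> a \<in> V} \<or> - x \<in> {a. \<phi> a \<in> V}"
    using h ultrafilter_ba_compl_iff[OF V] unfolding ba_hom_def by simp
qed

lemma stone_preimage_stone_set: "ba_hom \<phi> \<Longrightarrow> stone_preimage \<phi> (stone_set a) = stone_set (\<phi> a)"
  unfolding stone_preimage_def stone_set_def using ultrafilter_ba_hom_preimage by fastforce

lemma stone_preimage_compl:
  "ba_hom \<phi> \<Longrightarrow> stone_preimage \<phi> ({U. ultrafilter_ba U} - X) = {V. ultrafilter_ba V} - stone_preimage \<phi> X"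
  unfolding stone_preimage_def using ultrafilter_ba_hom_preimage by fastforce

lemma stone_preimage_subset: "stone_preimage \<phi> X \<subseteq> {V. ultrafilter_ba V}"
  unfolding stone_preimage_def by blast

lemma stone_preimage_Un: "stone_preimage \<phi> (X \<union> Y) = stone_preimage \<phi> X \<union> stone_preimage \<phi> Y"
  unfolding stone_preimage_def by blast

lemma stone_preimage_Int: "stone_preimage \<phi> (X \<inter> Y) = stone_preimage \<phi> X \<inter> stone_preimage \<phi> Y"
  unfolding stone_preimage_def by blast

lemma stone_preimage_UN: "stone_preimage \<phi> (\<Union>n. X n) = (\<Union>n. stone_preimage \<phi> (X n))"
  unfolding stone_preimage_def by blast

lemma represents_stone_set: "ba_hom \<phi> \<Longrightarrow> represents \<phi> (stone_set a) (\<phi> a)"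
  unfolding represents_def by (simp add: stone_preimage_stone_set lub_null_empty)

lemma represents_empty: "represents \<phi> {} bot"
  unfolding represents_def stone_preimage_def by (simp add: stone_set_bot lub_null_empty)

lemma represents_compl:
  assumes "ba_hom \<phi>" "represents \<phi> X b"
  shows "represents \<phi> ({U. ultrafilter_ba U} - X) (- b)"
proof -
  have "sym_diff (stone_preimage \<phi> ({U. ultrafilter_ba U} - X)) (stone_set (- b))
      = sym_diff (stone_preimage \<phi> X) (stone_set b)"
    unfolding stone_preimage_compl[OF assms(1)] stone_set_compl
    using stone_preimage_subset[of \<phi> X] stone_set_subset[of b] by blast
  then show ?thesis using assms(2) unfolding represents_def by simp
qed

lemma represents_Un:
  assumes "represents \<phi> X b" "represents \<phi> Y c"
  shows "represents \<phi> (X \<union> Y) (sup b c)"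
proof -
  have "sym_diff (stone_preimage \<phi> (X \<union> Y)) (stone_set (sup b c))
      \<subseteq> sym_diff (stone_preimage \<phi> X) (stone_set b) \<union> sym_diff (stone_preimage \<phi> Y) (stone_set c)"
    unfolding stone_preimage_Un stone_set_sup by blast
  then show ?thesis using assms unfolding represents_def by (metis lub_null_Un lub_null_subset)
qed

lemma represents_Int:
  assumes "represents \<phi> X b" "represents \<phi> Y c"
  shows "represents \<phi> (X \<inter> Y) (inf b c)"
proof -
  have "sym_diff (stone_preimage \<phi> (X \<inter> Y)) (stone_set (inf b c))
      \<subseteq> sym_diff (stone_preimage \<phi> X) (stone_set b) \<union> sym_diff (stone_preimage \<phi> Y) (stone_set c)"
    unfolding stone_preimage_Int stone_set_inf by blast
  then show ?thesis using assms unfolding represents_def by (metis lub_null_Un lub_null_subset)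
qed

lemma represents_UN:
  assumes bsa: "boolean_sigma_algebra TYPE('b::boolean_algebra)"
    and "\<And>n. represents (\<phi>::'a::boolean_algebra \<Rightarrow> 'b) (X n) (bs n)"
  shows "represents \<phi> (\<Union>n. X n) (seq_lub bs)"
proof -
  have "stone_set (bs n) \<subseteq> stone_set (seq_lub bs)" for n
    using is_lub_of_seq_lub[OF bsa, of bs] unfolding is_lub_of_def by (simp add: stone_set_mono)
  then have incl: "sym_diff (stone_preimage \<phi> (\<Union>n. X n)) (stone_set (seq_lub bs))
      \<subseteq> (\<Union>n. sym_diff (stone_preimage \<phi> (X n)) (stone_set (bs n))) \<union> lub_gap bs"
    unfolding stone_preimage_UN lub_gap_def by blast
  have "lub_null (\<Union>n. sym_diff (stone_preimage \<phi> (X n)) (stone_set (bs n)))"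
    using assms(2) unfolding represents_def by (rule lub_null_UN)
  then have "lub_null ((\<Union>n. sym_diff (stone_preimage \<phi> (X n)) (stone_set (bs n))) \<union> lub_gap bs)"
    using lub_null_lub_gap by (rule lub_null_Un)
  then show ?thesis unfolding represents_def using incl by (rule lub_null_subset)
qed

lemma represents_unique:
  assumes bsa: "boolean_sigma_algebra TYPE('b::boolean_algebra)"
    and "represents (\<phi>::'a::boolean_algebra \<Rightarrow> 'b) X b" "represents \<phi> X c"
  shows "b = c"
proof -
  have null: "lub_null (sym_diff (stone_set b) (stone_set c))"
    using lub_null_Un[OF assms(2,3)[unfolded represents_def]] by (rule lub_null_subset) blast
  have "stone_set (inf b (- c)) \<subseteq> sym_diff (stone_set b) (stone_set c)"
    "stone_set (inf c (- b)) \<subseteq> sym_diff (stone_set b) (stone_set c)"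
    unfolding stone_set_inf stone_set_compl by blast+
  then have "inf b (- c) = bot" "inf c (- b) = bot"
    using lub_null_stone_set_imp_bot[OF bsa] lub_null_subset[OF null] by blast+
  then show ?thesis by (simp add: inf_shunt order_antisym)
qed

lemma represents_exists:
  assumes bsa: "boolean_sigma_algebra TYPE('b::boolean_algebra)" and h: "ba_hom (\<phi>::'a::boolean_algebra \<Rightarrow> 'b)"
    and "X \<in> sigma_sets {U::'a set. ultrafilter_ba U} (range stone_set)"
  shows "\<exists>b. represents \<phi> X b"
  using assms(3)
proof induction
  case (Basic a)
  then show ?case using represents_stone_set[OF h] by blast
next
  case Empty
  then show ?case using represents_empty by blast
next
  case (Compl a)
  then show ?case using represents_compl[OF h] by blast
next
  case (Union A)
  then have "\<exists>bs. \<forall>n. represents \<phi> (A n) (bs n)" by (intro choice allI) blast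
  then show ?case using represents_UN[OF bsa] by blast
qed

lemma sigma_hom_empty: "sigma_hom \<Omega> M F \<Longrightarrow> F {} = bot"
  unfolding sigma_hom_def by blast

lemma sigma_hom_compl: "sigma_hom \<Omega> M F \<Longrightarrow> X \<in> M \<Longrightarrow> F (\<Omega> - X) = - F X"
  unfolding sigma_hom_def by blast

lemma sigma_hom_countable_Union:
  "sigma_hom \<Omega> M F \<Longrightarrow> countable C \<Longrightarrow> C \<subseteq> M \<Longrightarrow> is_lub_of (F ` C) (F (\<Union>C))"
  unfolding sigma_hom_def by blast

lemma sigma_hom_unique:
  assumes F: "sigma_hom \<Omega> (sigma_sets \<Omega> E) F" and G: "sigma_hom \<Omega> (sigma_sets \<Omega> E) G"
    and FG: "\<And>X. X \<in> E \<Longrightarrow> F X = G X" and X: "X \<in> sigma_sets \<Omega> E"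
  shows "F X = G X"
  using X
proof induction
  case (Basic a)
  then show ?case by (rule FG)
next
  case Empty
  show ?case using sigma_hom_empty[OF F] sigma_hom_empty[OF G] by simp
next
  case (Compl a)
  then show ?case using sigma_hom_compl[OF F] sigma_hom_compl[OF G] by simp
next
  case (Union A)
  have "range A \<subseteq> sigma_sets \<Omega> E" using Union.hyps by blast
  then have "is_lub_of (F ` range A) (F (\<Union>(range A)))" "is_lub_of (G ` range A) (G (\<Union>(range A)))"
    using sigma_hom_countable_Union[OF F] sigma_hom_countable_Union[OF G] by simp_all
  moreover have "F ` range A = G ` range A" using Union.IH by (simp add: image_image)
  ultimately show ?case using is_lub_of_unique by metis
qed

lemma sigma_hom_of_represents:
  fixes \<phi> :: "'a::boolean_algebra \<Rightarrow> 'b::boolean_algebra"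
  defines "\<Omega> \<equiv> {U::'a set. ultrafilter_ba U}"
  assumes bsa: "boolean_sigma_algebra TYPE('b)" and h: "ba_hom \<phi>"
    and rep: "\<And>X. X \<in> sigma_sets \<Omega> (range stone_set) \<Longrightarrow> represents \<phi> X (\<Phi> X)"
  shows "sigma_hom \<Omega> (sigma_sets \<Omega> (range stone_set)) \<Phi>"
proof -
  let ?M = "sigma_sets \<Omega> (range stone_set)"
  have eq: "\<Phi> X = b" if "X \<in> ?M" "represents \<phi> X b" for X b
    using represents_unique[OF bsa rep[OF that(1)] that(2)] .
  have lub: "is_lub_of (\<Phi> ` C) (\<Phi> (\<Union>C))" if "countable C" "C \<subseteq> ?M" for C
  proof (cases "C = {}")
    case True
    then show ?thesis using eq[OF sigma_sets.Empty represents_empty] unfolding is_lub_of_def by simp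
  next
    case False
    define A where "A = from_nat_into C"
    have A: "range A = C" unfolding A_def using that False by (simp add: range_from_nat_into)
    then have "A n \<in> ?M" for n using that by blast
    then have "represents \<phi> (\<Union>n. A n) (seq_lub (\<Phi> \<circ> A))"
      using rep by (intro represents_UN[OF bsa]) simp
    then have "\<Phi> (\<Union>C) = seq_lub (\<Phi> \<circ> A)"
      using eq A \<open>\<And>n. A n \<in> ?M\<close> by (metis sigma_sets.Union)
    moreover have "\<Phi> ` C = range (\<Phi> \<circ> A)" unfolding A[symmetric] by (simp only: image_comp)
    ultimately show ?thesis using is_lub_of_seq_lub[OF bsa, of "\<Phi> \<circ> A"] by (simp only:)
  qed
  interpret M: sigma_algebra \<Omega> ?M
    by (rule sigma_algebra_sigma_sets) (use stone_set_subset in \<open>auto simp: \<Omega>_def\<close>)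
  have "represents \<phi> \<Omega> top"
    using represents_compl[OF h represents_empty] by (simp add: \<Omega>_def)
  then have top: "\<Phi> \<Omega> = top" by (rule eq[OF M.top])
  have empty: "\<Phi> {} = bot" by (rule eq[OF M.empty_sets represents_empty])
  have union: "\<Phi> (X \<union> Y) = sup (\<Phi> X) (\<Phi> Y)" and inter: "\<Phi> (X \<inter> Y) = inf (\<Phi> X) (\<Phi> Y)"
    if "X \<in> ?M" "Y \<in> ?M" for X Y
    using that eq[OF M.Un represents_Un[OF rep rep]] eq[OF M.Int represents_Int[OF rep rep]] by simp_all
  have compl: "\<Phi> (\<Omega> - X) = - \<Phi> X" if "X \<in> ?M" for X
    using that eq[OF M.compl_sets represents_compl[OF h rep, folded \<Omega>_def]] by simp
  show ?thesis unfolding sigma_hom_def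
    by (intro conjI ballI allI impI) (simp_all add: union inter compl empty top lub)
qed

theorem proposition2p22:
  fixes \<phi> :: "'a::boolean_algebra \<Rightarrow> 'b::boolean_algebra"
  assumes "boolean_sigma_algebra TYPE('b)"
    and "ba_hom \<phi>"
  shows "\<exists>\<Phi>. sigma_hom (topspace (stone_space TYPE('a))) (baire_envelope TYPE('a)) \<Phi>
            \<and> (\<forall>a. \<Phi> (stone_set a) = \<phi> a)
            \<and> (\<forall>\<Psi>. sigma_hom (topspace (stone_space TYPE('a))) (baire_envelope TYPE('a)) \<Psi>
                   \<and> (\<forall>a. \<Psi> (stone_set a) = \<phi> a)
                   \<longrightarrow> (\<forall>X\<in>baire_envelope TYPE('a). \<Psi> X = \<Phi> X))"
proof -
  let ?\<Omega> = "{U::'a set. ultrafilter_ba U}"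
  let ?M = "sigma_sets ?\<Omega> (range stone_set)"
  define \<Phi> where "\<Phi> X = (THE b. represents \<phi> X b)" for X
  have rep: "represents \<phi> X (\<Phi> X)" if "X \<in> ?M" for X
  proof -
    have "\<exists>!b. represents \<phi> X b"
      using represents_exists[OF assms that] represents_unique[OF assms(1)] by blast
    then show ?thesis unfolding \<Phi>_def by (rule theI')
  qed
  have hom: "sigma_hom ?\<Omega> ?M \<Phi>"
    using assms rep by (rule sigma_hom_of_represents)
  have ext: "\<Phi> (stone_set a) = \<phi> a" for a
    using represents_unique[OF assms(1) rep represents_stone_set[OF assms(2)]] by blast
  have "\<Psi> X = \<Phi> X" if "sigma_hom ?\<Omega> ?M \<Psi>" "\<forall>a. \<Psi> (stone_set a) = \<phi> a" "X \<in> ?M" for \<Psi> X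
    using that(1) hom _ that(3) by (rule sigma_hom_unique) (use that(2) ext in auto)
  then show ?thesis
    unfolding baire_envelope_eq_sigma_sets_stone_set topspace_stone_space using hom ext by blast
qed

end
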